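(* Let $P(t)=\{\mathbf{x}\in\mathbb{R}^d:\mathbf{w}_i\cdot\mathbf{x}+b_i+s_it\ge0\ \forall i\in[k]\}$ be a polytope that expands with time, its bounding halfspaces moving outwards each at its own constant speed $s_i\ge0$ (with $\|\mathbf{w}_i\|=1$). Then at each combinatorial change of $P$, the Hausdorff speed of $P$ either stays the same or decreases; that is, if $t_1$ is a time of combinatorial change, the Hausdorff speed on the time interval immediately after $t_1$ is at most the Hausdorff speed on the time interval immediately before $t_1$.
   Context: For $S\subseteq\mathbb{R}^d$ and $\mathbf{p}\in\mathbb{R}^d$, $\delta_{\mathbf{p}}(S)=\inf_{\mathbf{q}\in S}\|\mathbf{p}-\mathbf{q}\|$. The Hausdorff distance is $\delta(S_1,S_2)=\max\{\sup_{\mathbf{p}\in S_1}\delta_{\mathbf{p}}(S_2),\sup_{\mathbf{p}\in S_2}\delta_{\mathbf{p}}(S_1)\}$. The Hausdorff speed of $P$ at time $t$ is $\lim_{\gamma\to0}\delta(P(t),P(t+\gamma))/\gamma$. A combinatorial change is a time at which the face structure of $P(t)$ changes (some faces disappear and others appear in their stead); between consecutive combinatorial changes the Hausdorff speed is constant. *)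

theory Defs
  imports "HOL-Analysis.Analysis"
begin

text \<open>Hausdorff distance, as in the paper (via the library's infdist,
  which is the infimum of distances to a set).  Meaningful for nonempty
  bounded sets.\<close>
definition hausdorff_dist :: "'a::metric_space set \<Rightarrow> 'a set \<Rightarrow> real" where
  "hausdorff_dist S1 S2 =
     max (SUP p\<in>S1. infdist p S2) (SUP p\<in>S2. infdist p S1)"

definition mpoly :: "nat \<Rightarrow> (nat \<Rightarrow> 'a::euclidean_space) \<Rightarrow> (nat \<Rightarrow> real)
    \<Rightarrow> (nat \<Rightarrow> real) \<Rightarrow> real \<Rightarrow> 'a set" where
  "mpoly k w b s t = {x. \<forall>i<k. w i \<bullet> x + b i + s i * t \<ge> 0}"

definition has_hausdorff_speed :: "(real \<Rightarrow> 'a::metric_space set) \<Rightarrow> real \<Rightarrow> real \<Rightarrow> bool" where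
  "has_hausdorff_speed P t v \<longleftrightarrow>
     ((\<lambda>g. hausdorff_dist (P t) (P (t + g)) / g) \<longlongrightarrow> v) (at_right 0)"

text \<open>Each nonempty
  face corresponds to the active set of its relative interior points.\<close>
definition face_structure :: "nat \<Rightarrow> (nat \<Rightarrow> 'a::euclidean_space) \<Rightarrow> (nat \<Rightarrow> real)
    \<Rightarrow> (nat \<Rightarrow> real) \<Rightarrow> real \<Rightarrow> nat set set" where
  "face_structure k w b s t =
     {I. \<exists>x\<in>mpoly k w b s t. I = {i. i < k \<and> w i \<bullet> x + b i + s i * t = 0}}"

definition combinatorial_change :: "nat \<Rightarrow> (nat \<Rightarrow> 'a::euclidean_space) \<Rightarrow> (nat \<Rightarrow> real)
    \<Rightarrow> (nat \<Rightarrow> real) \<Rightarrow> real \<Rightarrow> bool" where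
  "combinatorial_change k w b s t1 \<longleftrightarrow>
     \<not> (\<exists>e>0. \<forall>t\<in>{t1 - e<..<t1 + e}.
            face_structure k w b s t = face_structure k w b s t1)"

end

theory Submission
  imports Defs
begin

text \<open>The graph of t \<mapsto> P(t) is convex, being an intersection of half-spaces in
  time-space, and P increases with t.  Given tb \<le> ta and g > 0, a point p of P(ta + g)
  whose nearest point in P(ta) is a0 is matched with a point q of P(tb + g): the point of
  time tb + g on the segment from (tb, m) to (ta + g, p), where m is a point of P(tb)
  extreme in the direction p - a0.  The point of time ta on the same segment lies in P(ta),
  hence behind the supporting hyperplane of P(ta) at a0, and this pushes q a distance at
  least |p - a0| beyond the supporting hyperplane of P(tb) at m.\<close>

lemma bdd_above_infdist_image:
  assumes "bounded S" "A \<noteq> {}"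
  shows "bdd_above ((\<lambda>p. infdist p A) ` S)"
proof -
  obtain a where a: "a \<in> A" using assms(2) by auto
  obtain r where r: "\<And>p. p \<in> S \<Longrightarrow> dist a p \<le> r"
    using assms(1) bounded_any_center by metis
  have "infdist p A \<le> r" if "p \<in> S" for p
    using infdist_le[OF a, of p] dist_commute[of a p] r[OF that] by linarith
  then show ?thesis by (rule bdd_aboveI2)
qed

lemma hausdorff_dist_subset:
  assumes "A \<subseteq> B" "A \<noteq> {}" "bounded B"
  shows "hausdorff_dist A B = (SUP p\<in>B. infdist p A)"
proof -
  have "(SUP p\<in>A. infdist p B) = (SUP p\<in>A. 0)"
    using assms(1) by (intro SUP_cong) auto
  also have "\<dots> = 0"
    using assms(2) by (rule cSUP_const)
  finally have zero: "(SUP p\<in>A. infdist p B) = 0" .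
  obtain a where "a \<in> A" using assms(2) by auto
  then have "infdist a A \<le> (SUP p\<in>B. infdist p A)"
    using assms(1) by (intro cSUP_upper bdd_above_infdist_image[OF assms(3,2)]) auto
  then have "0 \<le> (SUP p\<in>B. infdist p A)"
    using infdist_nonneg order_trans by blast
  then show ?thesis
    by (simp add: hausdorff_dist_def zero max.absorb2)
qed

lemma convex_graphD:
  fixes P :: "real \<Rightarrow> 'a::real_vector set"
  assumes "convex (Sigma UNIV P)" "x \<in> P t" "y \<in> P t'" "0 \<le> l" "l \<le> 1"
  shows "l *\<^sub>R x + (1 - l) *\<^sub>R y \<in> P (l * t + (1 - l) * t')"
  using convexD[OF assms(1), of "(t, x)" "(t', y)" l "1 - l"] assms(2-5) by simp

lemma convex_graph_slice:
  fixes P :: "real \<Rightarrow> 'a::real_vector set"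
  assumes "convex (Sigma UNIV P)"
  shows "convex (P t)"
proof (rule convexI)
  fix x y and u v :: real
  assume "x \<in> P t" "y \<in> P t" "0 \<le> u" "0 \<le> v" "u + v = 1"
  then have "u *\<^sub>R x + (1 - u) *\<^sub>R y \<in> P (u * t + (1 - u) * t)"
    by (intro convex_graphD[OF assms]) auto
  moreover have "u * t + (1 - u) * t = t" "1 - u = v"
    using \<open>u + v = 1\<close> by (auto simp: algebra_simps)
  ultimately show "u *\<^sub>R x + v *\<^sub>R y \<in> P t"
    by simp
qed

lemma exists_infdist_ge_earlier:
  fixes P :: "real \<Rightarrow> 'a::euclidean_space set"
  assumes graph: "convex (Sigma UNIV P)"
    and closed: "closed (P ta)" and ne_a: "P ta \<noteq> {}"
    and compact: "compact (P tb)" and ne_b: "P tb \<noteq> {}"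
    and "tb \<le> ta" "0 < g" and p: "p \<in> P (ta + g)"
  obtains q where "q \<in> P (tb + g)" "infdist p (P ta) \<le> infdist q (P tb)"
proof -
  define a0 where "a0 = closest_point (P ta) p"
  define v where "v = p - a0"
  have a0: "a0 \<in> P ta"
    unfolding a0_def using closest_point_in_set[OF closed ne_a] .
  obtain m where m: "m \<in> P tb" and m_max: "\<And>y. y \<in> P tb \<Longrightarrow> v \<bullet> y \<le> v \<bullet> m"
  proof -
    have "continuous_on (P tb) (\<lambda>y. v \<bullet> y)"
      by (intro continuous_intros)
    then show thesis
      using continuous_attains_sup[OF compact ne_b] that by blast
  qed
  define l where "l = g / (ta - tb + g)"
  have "0 < ta - tb + g"
    using \<open>tb \<le> ta\<close> \<open>0 < g\<close> by linarith
  then have l: "0 \<le> l" "l \<le> 1" "l * (ta - tb + g) = g"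
    using \<open>tb \<le> ta\<close> \<open>0 < g\<close> by (simp_all add: l_def field_simps)
  define q where "q = (1 - l) *\<^sub>R m + l *\<^sub>R p"
  have "l * tb + (1 - l) * (ta + g) = ta + g - l * (ta - tb + g)"
    by (simp add: algebra_simps)
  then have "l *\<^sub>R m + (1 - l) *\<^sub>R p \<in> P ta"
    using convex_graphD[OF graph m p l(1,2)] l(3) by simp
  then have "v \<bullet> ((l *\<^sub>R m + (1 - l) *\<^sub>R p) - a0) \<le> 0"
    unfolding v_def a0_def by (rule closest_point_dot[OF convex_graph_slice[OF graph] closed])
  moreover have "v \<bullet> ((l *\<^sub>R m + (1 - l) *\<^sub>R p) - a0) = l * (v \<bullet> m) + (1 - l) * (v \<bullet> p) - v \<bullet> a0"
    by (simp add: inner_diff_right inner_add_right)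
  moreover have "v \<bullet> v = v \<bullet> p - v \<bullet> a0"
    by (simp add: v_def inner_diff_right)
  moreover have "v \<bullet> (q - m) = l * (v \<bullet> p - v \<bullet> m)"
    by (simp add: q_def inner_diff_right inner_add_right algebra_simps)
  ultimately have vv: "v \<bullet> v \<le> v \<bullet> (q - m)"
    by (simp add: algebra_simps)
  have dist_ge: "norm v \<le> dist q y" if "y \<in> P tb" for y
  proof -
    have "v \<bullet> v \<le> v \<bullet> (q - y)"
      using vv m_max[OF that] by (simp add: inner_diff_right)
    also have "\<dots> \<le> norm v * norm (q - y)"
      by (rule Cauchy_Schwarz_ineq2[THEN order_trans[OF abs_ge_self]])
    finally have "norm v * norm v \<le> norm v * dist q y"
      by (simp add: dist_norm power2_eq_square flip: power2_norm_eq_inner)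
    then show ?thesis
      using mult_le_cancel_left_pos[of "norm v"] by (cases "v = 0") auto
  qed
  have "(1 - l) * tb + (1 - (1 - l)) * (ta + g) = tb + l * (ta - tb + g)"
    by (simp add: algebra_simps)
  then have "q \<in> P (tb + g)"
    using convex_graphD[OF graph m p, of "1 - l"] l by (simp add: q_def)
  moreover have "infdist p (P ta) \<le> infdist q (P tb)"
  proof -
    have "infdist p (P ta) \<le> norm v"
      using infdist_le[OF a0, of p] by (simp add: v_def dist_norm)
    also have "\<dots> \<le> infdist q (P tb)"
      unfolding infdist_notempty[OF ne_b] by (rule cINF_greatest[OF ne_b dist_ge])
    finally show ?thesis .
  qed
  ultimately show thesis by (rule that)
qed

lemma hausdorff_dist_shift_antimono:
  fixes P :: "real \<Rightarrow> 'a::euclidean_space set"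
  assumes graph: "convex (Sigma UNIV P)" and "mono P"
    and closed: "\<And>t. closed (P t)" and bounded: "\<And>t. bounded (P t)"
    and ne_b: "P tb \<noteq> {}" and "tb \<le> ta" "0 < g"
  shows "hausdorff_dist (P ta) (P (ta + g)) \<le> hausdorff_dist (P tb) (P (tb + g))"
proof -
  have grow: "P t \<subseteq> P (t + g)" for t
    using \<open>mono P\<close> \<open>0 < g\<close> by (simp add: monoD)
  have ne_a: "P ta \<noteq> {}"
    using ne_b monoD[OF \<open>mono P\<close> \<open>tb \<le> ta\<close>] by auto
  have compact: "compact (P t)" for t
    using closed bounded compact_eq_bounded_closed by blast
  have "(SUP p\<in>P (ta + g). infdist p (P ta)) \<le> (SUP q\<in>P (tb + g). infdist q (P tb))"
  proof (rule cSUP_mono)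
    show "P (ta + g) \<noteq> {}" using ne_a grow by blast
    show "bdd_above ((\<lambda>q. infdist q (P tb)) ` P (tb + g))"
      using bdd_above_infdist_image[OF bounded ne_b] .
    show "\<exists>q\<in>P (tb + g). infdist p (P ta) \<le> infdist q (P tb)" if "p \<in> P (ta + g)" for p
      by (rule exists_infdist_ge_earlier[OF graph closed ne_a compact ne_b \<open>tb \<le> ta\<close> \<open>0 < g\<close> that])
        blast
  qed
  then show ?thesis
    unfolding hausdorff_dist_subset[OF grow ne_a bounded] hausdorff_dist_subset[OF grow ne_b bounded] .
qed

lemma hausdorff_speed_antimono:
  fixes P :: "real \<Rightarrow> 'a::euclidean_space set"
  assumes "convex (Sigma UNIV P)" "mono P" "\<And>t. closed (P t)" "\<And>t. bounded (P t)"
    and "P tb \<noteq> {}" "tb \<le> ta"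
    and speed_b: "has_hausdorff_speed P tb vb" and speed_a: "has_hausdorff_speed P ta va"
  shows "va \<le> vb"
proof -
  have "\<forall>\<^sub>F g in at_right 0. hausdorff_dist (P ta) (P (ta + g)) / g
          \<le> hausdorff_dist (P tb) (P (tb + g)) / g"
    using eventually_at_right_less[of "0::real"]
    by eventually_elim
      (use hausdorff_dist_shift_antimono[OF assms(1-6)] in \<open>simp add: divide_right_mono\<close>)
  then show ?thesis
    using tendsto_le[OF trivial_limit_at_right_real] speed_a speed_b
    unfolding has_hausdorff_speed_def by blast
qed

lemma convex_graph_mpoly: "convex (Sigma UNIV (mpoly k w b s))"
proof -
  have "- b i \<le> (s i, w i) \<bullet> (t, x) \<longleftrightarrow> 0 \<le> w i \<bullet> x + b i + s i * t" for i t x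
    by (auto simp: inner_real_def)
  then have "Sigma UNIV (mpoly k w b s) = (\<Inter>i<k. {z. (s i, w i) \<bullet> z \<ge> - b i})"
    by (auto simp: mpoly_def)
  then show ?thesis
    by (simp add: convex_INT convex_halfspace_ge)
qed

lemma closed_mpoly: "closed (mpoly k w b s t)"
proof -
  have "- b i - s i * t \<le> w i \<bullet> x \<longleftrightarrow> 0 \<le> w i \<bullet> x + b i + s i * t" for i x
    by auto
  then have "mpoly k w b s t = (\<Inter>i<k. {x. w i \<bullet> x \<ge> - b i - s i * t})"
    by (auto simp: mpoly_def)
  then show ?thesis
    by (simp add: closed_INT closed_halfspace_ge)
qed

lemma mono_mpoly:
  assumes "\<And>i. i < k \<Longrightarrow> 0 \<le> s i"
  shows "mono (mpoly k w b s)"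
proof (rule monoI, rule subsetI)
  fix t t' :: real and x
  assume "t \<le> t'" "x \<in> mpoly k w b s t"
  moreover have "s i * t \<le> s i * t'" if "i < k" for i
    using assms[OF that] \<open>t \<le> t'\<close> by (simp add: mult_left_mono)
  ultimately show "x \<in> mpoly k w b s t'"
    by (force simp: mpoly_def)
qed

theorem lemma13:
  fixes w :: "nat \<Rightarrow> 'a::euclidean_space" and b s :: "nat \<Rightarrow> real"
    and k :: nat and t1 e v1 v2 :: real
  assumes unit: "\<And>i. i < k \<Longrightarrow> norm (w i) = 1"
    and speeds: "\<And>i. i < k \<Longrightarrow> s i \<ge> 0"
    and polytope: "\<And>t. bounded (mpoly k w b s t)"
    and nonempty: "\<And>t. t \<in> {t1 - e<..<t1 + e} \<Longrightarrow> mpoly k w b s t \<noteq> {}"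
    and e_pos: "e > 0"
    and change: "combinatorial_change k w b s t1"
    and no_change_before: "\<And>t. t \<in> {t1 - e<..<t1} \<Longrightarrow> \<not> combinatorial_change k w b s t"
    and no_change_after: "\<And>t. t \<in> {t1<..<t1 + e} \<Longrightarrow> \<not> combinatorial_change k w b s t"
    and before: "\<And>t. t \<in> {t1 - e<..<t1} \<Longrightarrow> has_hausdorff_speed (mpoly k w b s) t v1"
    and after: "\<And>t. t \<in> {t1<..<t1 + e} \<Longrightarrow> has_hausdorff_speed (mpoly k w b s) t v2"
  shows "v2 \<le> v1"
proof -
  have "t1 - e / 2 \<in> {t1 - e<..<t1}" "t1 + e / 2 \<in> {t1<..<t1 + e}"
    using e_pos by auto
  then show ?thesis
    using hausdorff_speed_antimono[OF convex_graph_mpoly mono_mpoly[OF speeds] closed_mpoly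
        polytope nonempty _ before after, where tb = "t1 - e / 2" and ta = "t1 + e / 2"]
    by auto
qed

end
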